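(* Let $I$ be a compact metric space, $\mu$ a non-negative finite Borel measure on $I$, $N\ge2$ and $N'\le N$ natural numbers, and $s:\mathcal{G}\to[0,\infty)$ a surplus function. Define $S:I^{N!}\to\mathbb{R}$ by $S(i_1,\dots,i_{N!})=\hat s([i_1,\dots,i_{N!}])$ and $\hat{\mathcal{U}}=\{u\in L^1(I,\mu):\sum_{k=1}^{N!}u(i_k)\ge(N-1)!\,S(i_1,\dots,i_{N!})\ \forall i_1,\dots,i_{N!}\in I\}$, $\mathcal{U}_n=\{u\in L^1(I,\mu):\sum_{k=1}^nu(i_k)\ge s([i_1,\dots,i_n])\ \forall i_1,\dots,i_n\in I\}$ for $N'\le n\le N$, and $\mathcal{U}=\{u\in L^1(I,\mu):\sum_{i\in G}u(i)\ge s(G)\ \forall G\in\mathcal{G}\}$. Then $\hat{\mathcal{U}}=\mathcal{U}=\bigcap_{n=N'}^N\mathcal{U}_n$.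
   Context: For $n\in\mathbb{N}$, $I^n/\sim_n$ is the quotient of $I^n$ by permutation of coordinates, classes written $[i_1,\dots,i_n]$; $\mathcal{G}_n=I^n/\sim_n$ (multisets of size $n$) and $\mathcal{G}=\bigcup_{n=N'}^N\mathcal{G}_n$; $s_n=s|_{\mathcal{G}_n}$. For $G=[i_1,\dots,i_n]$, $\sum_{i\in G}u(i)=\sum_{k=1}^nu(i_k)$. For $N'\le n\le N$, $K_n\subset I^{N!}/\sim_{N!}$ is the set of classes $[i_1,\dots,i_{N!}]$ such that for each $i\in I$, $|\{k:i_k=i\}|$ is divisible by $N!/n$; $P_n:K_n\to\mathcal{G}_n$ sends $[\underbrace{j_1,\dots,j_1}_{N!/n},\dots,\underbrace{j_n,\dots,j_n}_{N!/n}]$ to $[j_1,\dots,j_n]$. $\hat s_n=s_n\circ P_n$ on $K_n$ and $0$ off $K_n$; $\hat s=\max_{N'\le n\le N}\frac{N}{n}\hat s_n$. *)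

theory Defs
  imports "HOL-Analysis.Analysis" "HOL-Library.Multiset"
begin

text \<open>Multisets of size n with elements in I (the classes of I^n modulo permutations).\<close>
definition Gn :: "'a set \<Rightarrow> nat \<Rightarrow> 'a multiset set" where
  "Gn I n = {G. size G = n \<and> set_mset G \<subseteq> I}"

definition calG :: "'a set \<Rightarrow> nat \<Rightarrow> nat \<Rightarrow> 'a multiset set" where
  "calG I N' N = (\<Union>n\<in>{N'..N}. Gn I n)"

definition Kn :: "'a set \<Rightarrow> nat \<Rightarrow> nat \<Rightarrow> 'a multiset set" where
  "Kn I N n = {M. size M = fact N \<and> set_mset M \<subseteq> I \<and> (\<forall>i. (fact N div n) dvd count M i)}"

definition Pn :: "nat \<Rightarrow> nat \<Rightarrow> 'a multiset \<Rightarrow> 'a multiset" where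
  "Pn N n M = (THE G. repeat_mset (fact N div n) G = M)"

definition s_hat_n :: "'a set \<Rightarrow> ('a multiset \<Rightarrow> real) \<Rightarrow> nat \<Rightarrow> nat \<Rightarrow> 'a multiset \<Rightarrow> real" where
  "s_hat_n I s N n M = (if M \<in> Kn I N n then s (Pn N n M) else 0)"

definition s_hat :: "'a set \<Rightarrow> ('a multiset \<Rightarrow> real) \<Rightarrow> nat \<Rightarrow> nat \<Rightarrow> 'a multiset \<Rightarrow> real" where
  "s_hat I s N' N M = Max ((\<lambda>n. (real N / real n) * s_hat_n I s N n M) ` {N'..N})"

definition S_fun :: "'a set \<Rightarrow> ('a multiset \<Rightarrow> real) \<Rightarrow> nat \<Rightarrow> nat \<Rightarrow> (nat \<Rightarrow> 'a) \<Rightarrow> real" where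
  "S_fun I s N' N i = s_hat I s N' N (image_mset i (mset_set {..<fact N}))"

definition U_hat :: "'a measure \<Rightarrow> 'a set \<Rightarrow> ('a multiset \<Rightarrow> real) \<Rightarrow> nat \<Rightarrow> nat \<Rightarrow> ('a \<Rightarrow> real) set" where
  "U_hat M I s N' N = {u. integrable M u \<and>
     (\<forall>i. (\<forall>k<fact N. i k \<in> I) \<longrightarrow>
        (\<Sum>k<fact N. u (i k)) \<ge> real (fact (N - 1)) * S_fun I s N' N i)}"

definition U_n :: "'a measure \<Rightarrow> 'a set \<Rightarrow> ('a multiset \<Rightarrow> real) \<Rightarrow> nat \<Rightarrow> ('a \<Rightarrow> real) set" where
  "U_n M I s n = {u. integrable M u \<and>
     (\<forall>i. (\<forall>k<n. i k \<in> I) \<longrightarrow>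
        (\<Sum>k<n. u (i k)) \<ge> s (image_mset i (mset_set {..<n})))}"

definition U_all :: "'a measure \<Rightarrow> 'a set \<Rightarrow> ('a multiset \<Rightarrow> real) \<Rightarrow> nat \<Rightarrow> nat \<Rightarrow> ('a \<Rightarrow> real) set" where
  "U_all M I s N' N = {u. integrable M u \<and>
     (\<forall>G\<in>calG I N' N. (\<Sum>i\<in>#G. u i) \<ge> s G)}"

end

theory Submission
  imports Defs
begin

text \<open>All sets in question are cut out of the integrable functions by linear constraints on
the values of \<open>u\<close>, so only the constraint systems have to be compared. A constraint indexed by a tuple \<open>(i\<^sub>1, \<dots>, i\<^sub>n)\<close> only depends on the
multiset \<open>[i\<^sub>1, \<dots>, i\<^sub>n]\<close>, and every multiset of size \<open>n\<close> arises this way; this gives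
\<open>\<U> = \<Inter>\<^sub>n \<U>\<^sub>n\<close> and turns the constraints of \<open>\<U>\<close>-hat into constraints over multisets of size \<open>N!\<close>.
The members of \<open>K\<^sub>n\<close> are exactly the multisets of size \<open>n\<close> with every element repeated
\<open>N!/n = (N-1)! N/n\<close> times, and repetition multiplies both sides of a constraint of \<open>\<U>\<close> by
\<open>N!/n\<close>. Hence on \<open>K\<^sub>n\<close> the \<open>n\<close>-th term of the maximum defining s-hat gives a rescaled
constraint of \<open>\<U>\<close>, and off \<open>K\<^sub>n\<close> it vanishes, where the constraint holds because the
constraints of \<open>\<U>\<close> at \<open>[x, \<dots>, x]\<close> together with \<open>s \<ge> 0\<close> force \<open>u \<ge> 0\<close> on \<open>I\<close>.\<close>

lemma set_mset_repeat_mset [simp]: "n > 0 \<Longrightarrow> set_mset (repeat_mset n A) = set_mset A"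
  by (simp add: set_eq_iff flip: count_greater_zero_iff)

lemma sum_mset_repeat_mset:
  "(\<Sum>x\<in>#repeat_mset n A. f x) = of_nat n * (\<Sum>x\<in>#A. (f x :: 'b :: comm_semiring_1))"
  by (induction n) (auto simp: algebra_simps)

lemma repeat_mset_if_dvd_count:
  assumes "n > 0" and "\<And>x. n dvd count M x"
  obtains A where "M = repeat_mset n A"
proof
  have "finite {x. 0 < count M x div n}"
    by (rule finite_subset[of _ "set_mset M"]) (auto simp: div_greater_zero_iff intro: count_inI)
  then show "M = repeat_mset n (Abs_multiset (\<lambda>x. count M x div n))"
    using assms by (intro multiset_eqI) (simp add: count_Abs_multiset)
qed

lemma sum_mset_image_mset_lessThan:
  "(\<Sum>x\<in>#image_mset i (mset_set {..<n}). f x) = (\<Sum>k<n. f (i k))"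
  by (simp add: sum_unfold_sum_mset image_mset.compositionality comp_def)

lemma image_mset_tuples_eq_Gn:
  "(\<lambda>i. image_mset i (mset_set {..<n})) ` {i. \<forall>k<n. i k \<in> I} = Gn I n"
proof (intro equalityI subsetI)
  fix G assume "G \<in> (\<lambda>i. image_mset i (mset_set {..<n})) ` {i. \<forall>k<n. i k \<in> I}"
  then show "G \<in> Gn I n" by (auto simp: Gn_def)
next
  fix G assume G: "G \<in> Gn I n"
  obtain xs where xs: "mset xs = G" using ex_mset by blast
  have "length xs = n"
    using G xs by (auto simp: Gn_def)
  then have "image_mset ((!) xs) (mset_set {..<n}) = mset (map ((!) xs) [0..<length xs])"
    by (simp add: lessThan_atLeast0)
  also have "\<dots> = G"
    using xs by (simp add: map_nth)
  finally have "image_mset ((!) xs) (mset_set {..<n}) = G" .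
  moreover have "\<forall>k<n. xs ! k \<in> I"
    using G xs by (auto simp: Gn_def)
  ultimately show "G \<in> (\<lambda>i. image_mset i (mset_set {..<n})) ` {i. \<forall>k<n. i k \<in> I}"
    by blast
qed

lemma all_tuples_iff_all_Gn:
  "(\<forall>i. (\<forall>k<n. i k \<in> I) \<longrightarrow> P (image_mset i (mset_set {..<n}))) \<longleftrightarrow> (\<forall>G\<in>Gn I n. P G)"
  by (auto simp flip: image_mset_tuples_eq_Gn)

lemma U_n_eq:
  "U_n M I s n = {u. integrable M u \<and> (\<forall>G\<in>Gn I n. s G \<le> (\<Sum>x\<in>#G. u x))}"
  unfolding U_n_def
  using all_tuples_iff_all_Gn[where P = "\<lambda>G. s G \<le> (\<Sum>x\<in>#G. u x)" for u]
  by (simp add: sum_mset_image_mset_lessThan)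

lemma U_hat_eq:
  "U_hat M I s N' N = {u. integrable M u \<and>
     (\<forall>G\<in>Gn I (fact N). real (fact (N - 1)) * s_hat I s N' N G \<le> (\<Sum>x\<in>#G. u x))}"
  unfolding U_hat_def S_fun_def
  using all_tuples_iff_all_Gn[where P = "\<lambda>G. real (fact (N - 1)) * s_hat I s N' N G \<le> (\<Sum>x\<in>#G. u x)" for u]
  by (simp add: sum_mset_image_mset_lessThan)

lemma
  assumes "1 \<le> n" "n \<le> N"
  shows fact_div_pos: "fact N div n > (0::nat)"
    and of_nat_fact_div: "real (fact N div n) = real (fact (N - 1)) * (real N / real n)"
proof -
  have "n \<le> (fact N::nat)" using assms fact_ge_self[of N] by linarith
  then show "fact N div n > (0::nat)" using assms by (simp add: div_greater_zero_iff)
  have "real (fact N div n) = real (fact N) / real n"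
    using assms by (simp add: real_of_nat_div dvd_fact)
  also have "real (fact N) = real N * real (fact (N - 1))"
    using assms by (cases N) (auto simp: algebra_simps)
  finally show "real (fact N div n) = real (fact (N - 1)) * (real N / real n)"
    by simp
qed

lemma Kn_eq_repeat_mset_Gn:
  assumes "1 \<le> n" "n \<le> N"
  shows "Kn I N n = repeat_mset (fact N div n) ` Gn I n"
proof (intro equalityI subsetI)
  fix K assume K: "K \<in> Kn I N n"
  have pos: "fact N div n > 0" using fact_div_pos[OF assms] .
  then obtain G where G: "K = repeat_mset (fact N div n) G"
    using K by (elim repeat_mset_if_dvd_count) (auto simp: Kn_def)
  have "(fact N div n) * size G = (fact N div n) * n"
    using assms K G by (simp add: Kn_def dvd_fact)
  then have "size G = n" using pos by simp
  then show "K \<in> repeat_mset (fact N div n) ` Gn I n"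
    using K G pos by (auto simp: Kn_def Gn_def)
next
  fix K assume "K \<in> repeat_mset (fact N div n) ` Gn I n"
  then obtain G where G: "G \<in> Gn I n" and K: "K = repeat_mset (fact N div n) G"
    by blast
  have "size K = fact N"
    using assms G K by (simp add: Gn_def dvd_fact)
  moreover have "set_mset K \<subseteq> I"
    using G K fact_div_pos[OF assms] by (simp add: Gn_def)
  moreover have "\<forall>i. (fact N div n) dvd count K i"
    using K by simp
  ultimately show "K \<in> Kn I N n"
    unfolding Kn_def by blast
qed

lemma s_hat_n_repeat_mset:
  assumes "1 \<le> n" "n \<le> N" and "G \<in> Gn I n"
  shows "s_hat_n I s N n (repeat_mset (fact N div n) G) = s G"
proof -
  have "Pn N n (repeat_mset (fact N div n) G) = G"
    unfolding Pn_def
    by (rule the_equality) (use fact_div_pos[OF assms(1,2)] in \<open>auto simp: repeat_mset_cancel1\<close>)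
  moreover have "repeat_mset (fact N div n) G \<in> Kn I N n"
    using assms by (simp add: Kn_eq_repeat_mset_Gn)
  ultimately show ?thesis
    by (simp add: s_hat_n_def)
qed

lemma nonneg_if_surplus_dominated:
  fixes u :: "'a \<Rightarrow> real"
  assumes "1 \<le> N" and "N' \<le> N"
    and s_nonneg: "\<And>G. G \<in> calG I N' N \<Longrightarrow> 0 \<le> s G"
    and dominated: "\<forall>G\<in>calG I N' N. s G \<le> (\<Sum>x\<in>#G. u x)"
    and "x \<in> I"
  shows "0 \<le> u x"
proof -
  have "replicate_mset N x \<in> calG I N' N"
    using assms by (auto simp: calG_def Gn_def)
  then have "0 \<le> real N * u x"
    using s_nonneg dominated by (fastforce simp: sum_mset_replicate_mset)
  then show ?thesis
    using \<open>1 \<le> N\<close> by (simp add: zero_le_mult_iff)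
qed

lemma surplus_dominated_if_s_hat_dominated:
  assumes "1 \<le> N'"
    and dominated: "\<forall>K\<in>Gn I (fact N). real (fact (N - 1)) * s_hat I s N' N K \<le> (\<Sum>x\<in>#K. u x)"
    and "G \<in> calG I N' N"
  shows "s G \<le> (\<Sum>x\<in>#G. u x)"
proof -
  obtain n where n: "n \<in> {N'..N}" and G: "G \<in> Gn I n"
    using \<open>G \<in> calG I N' N\<close> by (auto simp: calG_def)
  have n_bounds: "1 \<le> n" "n \<le> N" using n \<open>1 \<le> N'\<close> by auto
  define K where "K = repeat_mset (fact N div n) G"
  have K_in_Kn: "K \<in> Kn I N n"
    unfolding K_def Kn_eq_repeat_mset_Gn[OF n_bounds] using G by (rule imageI)
  have "real (fact N div n) * s G = real (fact (N - 1)) * ((real N / real n) * s_hat_n I s N n K)"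
    using s_hat_n_repeat_mset[OF n_bounds G] of_nat_fact_div[OF n_bounds] by (simp add: K_def)
  also have "\<dots> \<le> real (fact (N - 1)) * s_hat I s N' N K"
    unfolding s_hat_def using n by (intro mult_left_mono Max_ge) auto
  also have "\<dots> \<le> (\<Sum>x\<in>#K. u x)"
    using dominated K_in_Kn by (auto simp: Kn_def Gn_def)
  also have "\<dots> = real (fact N div n) * (\<Sum>x\<in>#G. u x)"
    by (simp add: K_def sum_mset_repeat_mset)
  finally show ?thesis
    using fact_div_pos[OF n_bounds] by simp
qed

lemma s_hat_dominated_if_surplus_dominated:
  assumes "1 \<le> N'" and "N' \<le> N"
    and dominated: "\<forall>G\<in>calG I N' N. s G \<le> (\<Sum>x\<in>#G. u x)"
    and u_nonneg: "\<forall>x\<in>I. 0 \<le> u x"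
    and "K \<in> Gn I (fact N)"
  shows "real (fact (N - 1)) * s_hat I s N' N K \<le> (\<Sum>x\<in>#K. u x)"
proof -
  have sum_nonneg: "0 \<le> (\<Sum>x\<in>#K. u x)"
    using sum_mset_mono[of K "\<lambda>_. 0" u] u_nonneg \<open>K \<in> Gn I (fact N)\<close> by (auto simp: Gn_def)
  have "real (fact (N - 1)) * ((real N / real n) * s_hat_n I s N n K) \<le> (\<Sum>x\<in>#K. u x)"
    if n: "n \<in> {N'..N}" for n
  proof (cases "K \<in> Kn I N n")
    case False
    then show ?thesis using sum_nonneg by (simp add: s_hat_n_def)
  next
    case True
    have n_bounds: "1 \<le> n" "n \<le> N" using n \<open>1 \<le> N'\<close> by auto
    then obtain G where G: "G \<in> Gn I n" and K: "K = repeat_mset (fact N div n) G"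
      using True Kn_eq_repeat_mset_Gn by blast
    have "G \<in> calG I N' N" using G n by (auto simp: calG_def)
    then have "real (fact N div n) * s G \<le> real (fact N div n) * (\<Sum>x\<in>#G. u x)"
      using dominated by (simp add: mult_left_mono)
    then show ?thesis
      using s_hat_n_repeat_mset[OF n_bounds G] of_nat_fact_div[OF n_bounds]
      by (simp add: K sum_mset_repeat_mset mult.assoc)
  qed
  moreover have "s_hat I s N' N K \<in> (\<lambda>n. (real N / real n) * s_hat_n I s N n K) ` {N'..N}"
    unfolding s_hat_def using \<open>N' \<le> N\<close> by (intro Max_in) auto
  ultimately show ?thesis
    by auto
qed

theorem lemma6:
  fixes I :: "'a::metric_space set" and M :: "'a measure"
    and s :: "'a multiset \<Rightarrow> real" and N N' :: nat
  assumes "compact I"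
    and "sets M = sets (restrict_space borel I)" and "space M = I"
    and "finite_measure M"
    and "N \<ge> 2" and "1 \<le> N'" and "N' \<le> N"
    and "\<And>G. G \<in> calG I N' N \<Longrightarrow> s G \<ge> 0"
  shows "U_hat M I s N' N = U_all M I s N' N \<and>
         U_all M I s N' N = (\<Inter>n\<in>{N'..N}. U_n M I s n)"
proof
  have "(\<forall>G\<in>calG I N' N. s G \<le> (\<Sum>x\<in>#G. u x)) \<longleftrightarrow>
        (\<forall>K\<in>Gn I (fact N). real (fact (N - 1)) * s_hat I s N' N K \<le> (\<Sum>x\<in>#K. u x))"
    for u :: "'a \<Rightarrow> real"
  proof
    assume dominated: "\<forall>G\<in>calG I N' N. s G \<le> (\<Sum>x\<in>#G. u x)"
    moreover have "\<forall>x\<in>I. 0 \<le> u x"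
      using nonneg_if_surplus_dominated[OF _ _ assms(8) dominated] assms(5,7) by simp
    ultimately show "\<forall>K\<in>Gn I (fact N). real (fact (N - 1)) * s_hat I s N' N K \<le> (\<Sum>x\<in>#K. u x)"
      using s_hat_dominated_if_surplus_dominated assms(6,7) by blast
  qed (use surplus_dominated_if_s_hat_dominated assms(6) in blast)
  then show "U_hat M I s N' N = U_all M I s N' N"
    unfolding U_hat_eq U_all_def by simp
  show "U_all M I s N' N = (\<Inter>n\<in>{N'..N}. U_n M I s n)"
    unfolding U_n_eq U_all_def calG_def using assms(7) by auto
qed

end
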